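(* Let $n,d\ge1$, let $\sigma$ be a reflection of $\mathbb{Z}_n^d$ (with specified half-spaces $H^+,H^-$), and let $X$ be a lazy simple random walk on $\mathbb{Z}_n^d$. Then for all $t\ge1$, all $b\in\mathbb{Z}_n^d$ and all sets $D_1,\dots,D_t\subseteq\mathbb{Z}_n^d$, \[ \mathbb{P}\big(X_1\in D_1,\dots,X_t\in D_t\,\big|\,X_0\in\{b\}\big)\le\mathbb{P}\big(X_1\in D_1^\sigma,\dots,X_t\in D_t^\sigma\,\big|\,X_0\in\{b\}^\sigma\big). \]
   Context: $\mathbb{Z}_n^d$ is equipped with the graph distance of the torus (nearest-neighbour graph). A reflection of a metric space $(M,d)$ is an isometry $\sigma:M\to M$ together with a decomposition $M=H^0\sqcup H^+\sqcup H^-$ such that $\sigma^2x=x$ for all $x$, $H^0$ is the set of fixed points of $\sigma$, $\sigma H^+=H^-$, and $d(x,y)<d(x,\sigma y)$ for all $x,y\in H^+$. The two-point rearrangement of a set $A\subseteq M$ is $A^\sigma$ defined by $A^\sigma\cap H^+=(A\cup\sigma A)\cap H^+$, $A^\sigma\cap H^-=(A\cap\sigma A)\cap H^-$, $A^\sigma\cap H^0=A\cap H^0$ (note $\{b\}^\sigma$ is again a singleton). The lazy simple random walk on $\mathbb{Z}_n^d$ stays put with probability $1/2$ and otherwise moves from $x$ to $x\pm e_i$ ($i=1,\dots,d$), each with probability $1/(4d)$. *)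

theory Defs
  imports Complex_Main "HOL-Library.FuncSet"
begin

text \<open>Points of the discrete torus Z_n^d are represented as functions nat => nat with
  coordinates x i < n for i < d and x i = 0 for i >= d (canonical representatives).\<close>

type_synonym point = "nat \<Rightarrow> nat"

definition torus :: "nat \<Rightarrow> nat \<Rightarrow> point set" where
  "torus n d = {x. (\<forall>i<d. x i < n) \<and> (\<forall>i\<ge>d. x i = 0)}"

definition cdist :: "nat \<Rightarrow> nat \<Rightarrow> nat \<Rightarrow> nat" where
  "cdist n a b = (let m = (if a \<ge> b then a - b else b - a) in min m (n - m))"

definition tdist :: "nat \<Rightarrow> nat \<Rightarrow> point \<Rightarrow> point \<Rightarrow> nat" where
  "tdist n d x y = (\<Sum>i<d. cdist n (x i) (y i))"

definition plus_e :: "nat \<Rightarrow> nat \<Rightarrow> point \<Rightarrow> point" where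
  "plus_e n i x = x(i := (x i + 1) mod n)"

definition minus_e :: "nat \<Rightarrow> nat \<Rightarrow> point \<Rightarrow> point" where
  "minus_e n i x = x(i := (x i + n - 1) mod n)"

definition reflection :: "nat \<Rightarrow> nat \<Rightarrow> (point \<Rightarrow> point) \<Rightarrow> point set \<Rightarrow> point set \<Rightarrow> point set \<Rightarrow> bool" where
  "reflection n d \<sigma> H0 Hp Hm \<longleftrightarrow>
     (\<forall>x\<in>torus n d. \<sigma> x \<in> torus n d) \<and>
     (\<forall>x\<in>torus n d. \<forall>y\<in>torus n d. tdist n d (\<sigma> x) (\<sigma> y) = tdist n d x y) \<and>
     (\<forall>x\<in>torus n d. \<sigma> (\<sigma> x) = x) \<and>
     H0 = {x\<in>torus n d. \<sigma> x = x} \<and>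
     H0 \<union> Hp \<union> Hm = torus n d \<and> H0 \<inter> Hp = {} \<and> H0 \<inter> Hm = {} \<and> Hp \<inter> Hm = {} \<and>
     \<sigma> ` Hp = Hm \<and>
     (\<forall>x\<in>Hp. \<forall>y\<in>Hp. tdist n d x y < tdist n d x (\<sigma> y))"

definition rearr :: "(point \<Rightarrow> point) \<Rightarrow> point set \<Rightarrow> point set \<Rightarrow> point set \<Rightarrow> point set \<Rightarrow> point set" where
  "rearr \<sigma> H0 Hp Hm A =
     ((A \<union> \<sigma> ` A) \<inter> Hp) \<union> ((A \<inter> \<sigma> ` A) \<inter> Hm) \<union> (A \<inter> H0)"

definition lazy_P :: "nat \<Rightarrow> nat \<Rightarrow> point \<Rightarrow> point \<Rightarrow> real" where
  "lazy_P n d x y = (if y = x then 1/2 else 0) +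
     (\<Sum>i<d. ((if y = plus_e n i x then 1 else 0) + (if y = minus_e n i x then 1 else 0)) / (4 * real d))"

definition walk_prob :: "nat \<Rightarrow> nat \<Rightarrow> point \<Rightarrow> (nat \<Rightarrow> point set) \<Rightarrow> nat \<Rightarrow> real" where
  "walk_prob n d b D t =
     (\<Sum>p\<in>(\<Pi>\<^sub>E k\<in>{1..t}. D k \<inter> torus n d).
        \<Prod>k\<in>{1..t}. lazy_P n d (if k = 1 then b else p (k - 1)) (p k))"

text \<open>Conditioning on X_0 in S for a singleton S = {c}: the probability started at c.\<close>
definition cond_walk_prob :: "nat \<Rightarrow> nat \<Rightarrow> point set \<Rightarrow> (nat \<Rightarrow> point set) \<Rightarrow> nat \<Rightarrow> real" where
  "cond_walk_prob n d S D t = walk_prob n d (the_elem S) D t"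

end

theory Submission
  imports Defs
begin

text \<open>The transition probability of the lazy walk from x to y depends only on the torus
  distance of x and y and does not increase with it.  Hence it is invariant under the
  isometry \<sigma>, and from x \<in> Hp a step to y \<in> Hp is at least as likely as a step to \<sigma> y.
  Read backwards in time, the probability is obtained from the constant 1 by alternately
  multiplying with the indicator of D k and applying the transition operator.  Call v
  dominant over u if u \<ge> 0, v \<ge> u on H0 and, on every orbit {x, \<sigma> x} with x \<in> Hp, v x
  bounds both values of u and the orbit sum of v bounds that of u.  The indicator of the
  rearranged set dominates that of D k, and both operations preserve dominance; comparing
  the final functions at b and at the point of the rearranged {b} gives the inequality.\<close>

lemma cdist_eq_0_iff: "a < n \<Longrightarrow> b < n \<Longrightarrow> cdist n a b = 0 \<longleftrightarrow> a = b"
  by (auto simp: cdist_def Let_def min_def split: if_splits)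

lemma cdist_succ: "2 \<le> n \<Longrightarrow> a < n \<Longrightarrow> cdist n a ((a + 1) mod n) = 1"
  by (cases "a + 1 = n") (auto simp: cdist_def Let_def min_def)

lemma cdist_pred:
  assumes "2 \<le> n" "a < n" shows "cdist n a ((a + n - 1) mod n) = 1"
proof (cases a)
  case (Suc a')
  then have "(a + n - 1) mod n = a'" using assms by simp
  then show ?thesis using Suc assms by (auto simp: cdist_def Let_def min_def)
qed (use assms in \<open>auto simp: cdist_def Let_def min_def\<close>)

lemma cdist_eq_1_imp:
  assumes "a < n" "b < n" "cdist n a b = 1"
  shows "b = (a + 1) mod n \<or> b = (a + n - 1) mod n"
proof -
  have "b + 1 = a \<or> a + 1 = b \<or> (b = 0 \<and> a + 1 = n) \<or> (a = 0 \<and> b + 1 = n)"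
    using assms by (auto simp: cdist_def Let_def min_def split: if_splits)
  then show ?thesis using assms by auto
qed

lemma succ_mod_neq_pred_mod: "3 \<le> n \<Longrightarrow> a < n \<Longrightarrow> (a + 1) mod n \<noteq> (a + n - 1) mod (n::nat)"
  by (cases a; cases "a + 1 = n") auto

lemma finite_torus: "finite (torus n d)"
proof -
  have "torus n d \<subseteq> {f. \<forall>i. (i \<in> {..<d} \<longrightarrow> f i \<in> {..<n}) \<and> (i \<notin> {..<d} \<longrightarrow> f i = 0)}"
    by (auto simp: torus_def)
  then show ?thesis by (rule finite_subset) (rule finite_set_of_finite_funs, auto)
qed

lemma torus_coord_less: "x \<in> torus n d \<Longrightarrow> i < d \<Longrightarrow> x i < n"
  by (simp add: torus_def)

lemma torus_eqI:
  assumes "x \<in> torus n d" "y \<in> torus n d" "\<And>i. i < d \<Longrightarrow> x i = y i"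
  shows "x = y"
proof
  fix i show "x i = y i"
    using assms by (cases "i < d") (auto simp: torus_def)
qed

lemma tdist_eq_0_iff:
  assumes "x \<in> torus n d" "y \<in> torus n d"
  shows "tdist n d x y = 0 \<longleftrightarrow> x = y"
  using assms torus_eqI[OF assms] cdist_eq_0_iff torus_coord_less
  by (fastforce simp: tdist_def)

lemma tdist_fun_upd:
  assumes "x \<in> torus n d" "i < d"
  shows "tdist n d x (x(i := a)) = cdist n (x i) a"
proof -
  have "tdist n d x (x(i := a)) = (\<Sum>k<d. if k = i then cdist n (x i) a else 0)"
    unfolding tdist_def using assms by (intro sum.cong) (auto simp: cdist_eq_0_iff torus_coord_less)
  then show ?thesis using assms(2) by simp
qed

lemma tdist_plus_e: "2 \<le> n \<Longrightarrow> x \<in> torus n d \<Longrightarrow> i < d \<Longrightarrow> tdist n d x (plus_e n i x) = 1"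
  using cdist_succ[of n "x i"] by (simp add: plus_e_def tdist_fun_upd torus_coord_less)

lemma tdist_minus_e: "2 \<le> n \<Longrightarrow> x \<in> torus n d \<Longrightarrow> i < d \<Longrightarrow> tdist n d x (minus_e n i x) = 1"
  using cdist_pred[of n "x i"] by (simp add: minus_e_def tdist_fun_upd torus_coord_less)

lemma tdist_eq_1_E:
  assumes "x \<in> torus n d" "y \<in> torus n d" "tdist n d x y = 1"
  obtains i where "i < d" "cdist n (x i) (y i) = 1" "y = x(i := y i)"
proof -
  from assms(3) obtain i where i: "i < d" "cdist n (x i) (y i) = 1"
    and others: "\<forall>k<d. k \<noteq> i \<longrightarrow> cdist n (x k) (y k) = 0"
    unfolding tdist_def using sum_eq_1_iff[of "{..<d}"] by auto
  have "y = x(i := y i)"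
    using others assms by (intro torus_eqI[OF assms(2)]) (auto simp: torus_def cdist_eq_0_iff)
  with i that show ?thesis by blast
qed

lemma lazy_P_fun_upd:
  assumes "i < d" "a \<noteq> x i"
  shows "lazy_P n d x (x(i := a)) =
    ((if a = (x i + 1) mod n then 1 else 0) + (if a = (x i + n - 1) mod n then 1 else 0)) / (4 * real d)"
proof -
  have ne: "x(i := a) \<noteq> x" using assms(2) by (metis fun_upd_same)
  have "x(i := a) = plus_e n j x \<longleftrightarrow> j = i \<and> a = (x i + 1) mod n"
    and "x(i := a) = minus_e n j x \<longleftrightarrow> j = i \<and> a = (x i + n - 1) mod n" for j
    using assms(2) by (auto simp: plus_e_def minus_e_def fun_eq_iff split: if_splits)
  then show ?thesis
    unfolding lazy_P_def using ne assms(1) by (simp add: if_distrib[of "\<lambda>c. c / _"] sum.delta_remove)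
qed

text \<open>For n = 1 the torus is a single point, and for n = 2 the steps plus_e and minus_e coincide.\<close>

definition lazy_profile :: "nat \<Rightarrow> nat \<Rightarrow> nat \<Rightarrow> real" where
  "lazy_profile n d r =
    (if n = 1 then 1 else if r = 0 then 1/2 else if r = 1 then (if n = 2 then 2 else 1) / (4 * real d) else 0)"

lemma lazy_profile_antimono: "1 \<le> d \<Longrightarrow> r \<le> r' \<Longrightarrow> lazy_profile n d r' \<le> lazy_profile n d r"
  by (auto simp: lazy_profile_def field_simps)

lemma lazy_P_torus_1:
  assumes "x \<in> torus 1 d" "y \<in> torus 1 d" "1 \<le> d"
  shows "lazy_P 1 d x y = 1"
proof -
  have zero: "z i = 0" if "z \<in> torus 1 d" for z i
    using that unfolding torus_def by (cases "i < d") auto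
  have "x = y" "plus_e 1 i x = x" "minus_e 1 i x = x" for i
    using zero[OF assms(1)] zero[OF assms(2)] by (auto simp: plus_e_def minus_e_def fun_eq_iff)
  then show ?thesis using assms(3) by (simp add: lazy_P_def field_simps)
qed

lemma lazy_P_eq_profile:
  assumes "1 \<le> n" "1 \<le> d" "x \<in> torus n d" "y \<in> torus n d"
  shows "lazy_P n d x y = lazy_profile n d (tdist n d x y)"
proof (cases "n = 1")
  case True
  then show ?thesis using assms lazy_P_torus_1 by (simp add: lazy_profile_def)
next
  case False
  then have n2: "2 \<le> n" using assms(1) by simp
  have neighbours: "x \<noteq> plus_e n i x" "x \<noteq> minus_e n i x" if "i < d" for i
    using tdist_plus_e[OF n2 assms(3) that] tdist_minus_e[OF n2 assms(3) that]
    using tdist_eq_0_iff[OF assms(3) assms(3)] by auto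
  consider "y = x" | "tdist n d x y = 1" | "y \<noteq> x" "tdist n d x y \<noteq> 1" by blast
  then show ?thesis
  proof cases
    case 1
    then have "lazy_P n d x y = 1/2"
      using neighbours by (auto simp: lazy_P_def intro!: sum.neutral)
    then show ?thesis using 1 False by (simp add: lazy_profile_def tdist_eq_0_iff assms)
  next
    case 2
    then obtain i where i: "i < d" "cdist n (x i) (y i) = 1" and y: "y = x(i := y i)"
      using tdist_eq_1_E[OF assms(3,4)] by blast
    have lt: "x i < n" "y i < n" using assms(3,4) i(1) by (simp_all add: torus_coord_less)
    have "y i \<noteq> x i" using i(2) by (auto simp: cdist_def)
    then have "lazy_P n d x y = ((if y i = (x i + 1) mod n then 1 else 0)
        + (if y i = (x i + n - 1) mod n then 1 else 0)) / (4 * real d)"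
      using lazy_P_fun_upd[OF i(1)] y by metis
    also have "\<dots> = (if n = 2 then 2 else 1) / (4 * real d)"
      using cdist_eq_1_imp[OF lt i(2)] succ_mod_neq_pred_mod[of n "x i"] n2 lt(1)
      by (cases "n = 2") auto
    finally show ?thesis using 2 False by (simp add: lazy_profile_def)
  next
    case 3
    then have "y \<noteq> plus_e n i x" "y \<noteq> minus_e n i x" if "i < d" for i
      using tdist_plus_e[OF n2 assms(3) that] tdist_minus_e[OF n2 assms(3) that] by auto
    then have "lazy_P n d x y = 0"
      using 3 by (auto simp: lazy_P_def intro!: sum.neutral)
    then show ?thesis using 3 False by (simp add: lazy_profile_def tdist_eq_0_iff assms)
  qed
qed

text \<open>The order on the values at (x, \<sigma> x), x \<in> Hp, induced by the two-point rearrangement: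
  the indicator of A at (x, \<sigma> x) lies below that of rearr \<sigma> H0 Hp Hm A.\<close>

definition pair_le :: "real \<Rightarrow> real \<Rightarrow> real \<Rightarrow> real \<Rightarrow> bool" where
  "pair_le a b a' b' \<longleftrightarrow> a \<le> a' \<and> b \<le> a' \<and> a + b \<le> a' + b'"

lemma pair_le_diag: "c \<le> c' \<Longrightarrow> pair_le c c c' c'"
  by (simp add: pair_le_def)

lemma pair_le_add:
  "pair_le a b a' b' \<Longrightarrow> pair_le c e c' e' \<Longrightarrow> pair_le (a + c) (b + e) (a' + c') (b' + e')"
  by (simp add: pair_le_def)

lemma pair_le_sum:
  "(\<And>i. i \<in> I \<Longrightarrow> pair_le (f i) (g i) (f' i) (g' i)) \<Longrightarrow>
    pair_le (sum f I) (sum g I) (sum f' I) (sum g' I)"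
  unfolding pair_le_def by (auto intro: sum_mono simp: sum.distrib[symmetric])

lemma pair_le_mix:
  assumes "0 \<le> q" "q \<le> p" "pair_le a b a' b'"
  shows "pair_le (p * a + q * b) (q * a + p * b) (p * a' + q * b') (q * a' + p * b')"
proof -
  have "0 \<le> (p - q) * (a' - a) + q * (a' + b' - a - b)"
    and "0 \<le> (p - q) * (a' - b) + q * (a' + b' - a - b)"
    and "0 \<le> (p + q) * (a' + b' - a - b)"
    using assms by (auto simp: pair_le_def)
  then show ?thesis by (simp add: pair_le_def algebra_simps)
qed

definition kernel_op :: "'a set \<Rightarrow> ('a \<Rightarrow> 'a \<Rightarrow> real) \<Rightarrow> ('a \<Rightarrow> real) \<Rightarrow> 'a \<Rightarrow> real" where
  "kernel_op S K u x = (\<Sum>y\<in>S. K x y * u y)"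

text \<open>path_sum S K D j m b is the probability that the chain with kernel K visits
  D j, ..., D (j + m - 1) at times j, ..., j + m - 1 when started at b at time j - 1.\<close>

definition path_sum :: "'a set \<Rightarrow> ('a \<Rightarrow> 'a \<Rightarrow> real) \<Rightarrow> (nat \<Rightarrow> 'a set) \<Rightarrow> nat \<Rightarrow> nat \<Rightarrow> 'a \<Rightarrow> real" where
  "path_sum S K D j m b = (\<Sum>p\<in>(\<Pi>\<^sub>E k\<in>{j..<j+m}. D k \<inter> S).
     \<Prod>k\<in>{j..<j+m}. K (if k = j then b else p (k - 1)) (p k))"

lemma path_sum_0: "path_sum S K D j 0 b = 1"
  by (simp add: path_sum_def)

lemma path_sum_Suc_sum:
  "path_sum S K D j (Suc m) b = (\<Sum>y\<in>D j \<inter> S. K b y * path_sum S K D (Suc j) m y)"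
proof -
  let ?I = "{Suc j..<Suc j + m}" and ?T = "\<lambda>k. D k \<inter> S"
  let ?F = "\<lambda>p. \<Prod>k\<in>{j..<j + Suc m}. K (if k = j then b else p (k - 1)) (p k)"
  have I: "{j..<j + Suc m} = insert j ?I" by auto
  have j: "j \<notin> ?I" by auto
  have "path_sum S K D j (Suc m) b = sum ?F ((\<lambda>(y, g). g(j := y)) ` (?T j \<times> Pi\<^sub>E ?I ?T))"
    unfolding path_sum_def by (simp only: I PiE_insert_eq)
  also have "\<dots> = (\<Sum>(y, g)\<in>?T j \<times> Pi\<^sub>E ?I ?T. ?F (g(j := y)))"
    by (subst sum.reindex[OF inj_combinator[OF j]]) (simp add: case_prod_unfold)
  also have "\<dots> = (\<Sum>y\<in>?T j. \<Sum>g\<in>Pi\<^sub>E ?I ?T. ?F (g(j := y)))"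
    by (rule sum.cartesian_product[symmetric])
  also have "\<dots> = (\<Sum>y\<in>?T j. K b y * path_sum S K D (Suc j) m y)"
  proof (rule sum.cong[OF refl])
    fix y
    have "?F (g(j := y)) = K b y * (\<Prod>k\<in>?I. K (if k = Suc j then y else g (k - 1)) (g k))" for g
      unfolding I using j by (auto intro!: prod.cong)
    then show "(\<Sum>g\<in>Pi\<^sub>E ?I ?T. ?F (g(j := y))) = K b y * path_sum S K D (Suc j) m y"
      unfolding path_sum_def by (simp add: sum_distrib_left)
  qed
  finally show ?thesis .
qed

lemma path_sum_Suc:
  "finite S \<Longrightarrow> path_sum S K D j (Suc m) =
     kernel_op S K (\<lambda>y. if y \<in> D j then path_sum S K D (Suc j) m y else 0)"
  unfolding path_sum_Suc_sum kernel_op_def fun_eq_iff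
  by (auto simp: sum.inter_restrict Int_commute intro!: sum.cong)

lemma walk_prob_eq_path_sum: "walk_prob n d b D t = path_sum (torus n d) (lazy_P n d) D 1 t b"
  unfolding walk_prob_def path_sum_def by (simp add: atLeastLessThanSuc_atLeastAtMost)

locale torus_reflection =
  fixes n d :: nat and \<sigma> :: "point \<Rightarrow> point" and H0 Hp Hm :: "point set"
  assumes reflection: "reflection n d \<sigma> H0 Hp Hm"
begin

lemma reflection_in_torus: "x \<in> torus n d \<Longrightarrow> \<sigma> x \<in> torus n d"
  using reflection unfolding reflection_def by meson

lemma reflection_involutive: "x \<in> torus n d \<Longrightarrow> \<sigma> (\<sigma> x) = x"
  using reflection unfolding reflection_def by meson

lemma reflection_isometry: "x \<in> torus n d \<Longrightarrow> y \<in> torus n d \<Longrightarrow> tdist n d (\<sigma> x) (\<sigma> y) = tdist n d x y"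
  using reflection unfolding reflection_def by meson

lemma H0_eq: "H0 = {x \<in> torus n d. \<sigma> x = x}"
  using reflection unfolding reflection_def by meson

lemma torus_eq_Un: "torus n d = H0 \<union> Hp \<union> Hm"
  using reflection unfolding reflection_def by metis

lemma halfspaces_disjoint: "H0 \<inter> Hp = {}" "H0 \<inter> Hm = {}" "Hp \<inter> Hm = {}"
  using reflection unfolding reflection_def by meson+

lemma image_Hp: "\<sigma> ` Hp = Hm"
  using reflection unfolding reflection_def by meson

lemma tdist_less_reflected: "x \<in> Hp \<Longrightarrow> y \<in> Hp \<Longrightarrow> tdist n d x y < tdist n d x (\<sigma> y)"
  using reflection unfolding reflection_def by meson

lemma image_Hm: "x \<in> Hm \<Longrightarrow> \<sigma> x \<in> Hp"
  using image_Hp reflection_involutive torus_eq_Un by auto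

lemma sum_torus_orbits: "(\<Sum>y\<in>torus n d. g y) = (\<Sum>y\<in>Hp. g y + g (\<sigma> y)) + (\<Sum>z\<in>H0. g z)"
proof -
  have fin: "finite H0" "finite Hp" "finite Hm"
    using finite_torus[of n d] unfolding torus_eq_Un by simp_all
  have "inj_on \<sigma> Hp"
    using reflection_involutive torus_eq_Un by (metis UnCI inj_onI)
  then have "(\<Sum>y\<in>Hm. g y) = (\<Sum>y\<in>Hp. g (\<sigma> y))"
    using sum.reindex[of \<sigma> Hp g] image_Hp by simp
  then show ?thesis
    unfolding torus_eq_Un using fin halfspaces_disjoint
    by (simp add: sum.union_disjoint Int_Un_distrib2 sum.distrib add_ac)
qed

lemma rearr_Hp_iff:
  assumes "A \<subseteq> torus n d" "y \<in> Hp"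
  shows "y \<in> rearr \<sigma> H0 Hp Hm A \<longleftrightarrow> y \<in> A \<or> \<sigma> y \<in> A"
    and "\<sigma> y \<in> rearr \<sigma> H0 Hp Hm A \<longleftrightarrow> y \<in> A \<and> \<sigma> y \<in> A"
proof -
  have mem_image: "z \<in> \<sigma> ` A \<longleftrightarrow> \<sigma> z \<in> A" if "z \<in> torus n d" for z
    using that assms(1) reflection_involutive by (metis image_iff subsetD)
  have y: "y \<in> torus n d" "y \<notin> Hm" "y \<notin> H0"
    using assms(2) torus_eq_Un halfspaces_disjoint by auto
  have sy: "\<sigma> y \<in> torus n d" "\<sigma> y \<in> Hm" "\<sigma> y \<notin> Hp" "\<sigma> y \<notin> H0" "\<sigma> (\<sigma> y) = y"
    using assms(2) torus_eq_Un halfspaces_disjoint image_Hp reflection_involutive by auto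
  show "y \<in> rearr \<sigma> H0 Hp Hm A \<longleftrightarrow> y \<in> A \<or> \<sigma> y \<in> A"
    unfolding rearr_def using assms(2) y mem_image[of y] by auto
  show "\<sigma> y \<in> rearr \<sigma> H0 Hp Hm A \<longleftrightarrow> y \<in> A \<and> \<sigma> y \<in> A"
    unfolding rearr_def using sy mem_image[of "\<sigma> y"] by auto
qed

lemma rearr_H0_iff: "z \<in> H0 \<Longrightarrow> z \<in> rearr \<sigma> H0 Hp Hm A \<longleftrightarrow> z \<in> A"
  unfolding rearr_def using halfspaces_disjoint by blast

lemma rearr_singleton:
  assumes "b \<in> torus n d" shows "rearr \<sigma> H0 Hp Hm {b} = {if b \<in> Hm then \<sigma> b else b}"
proof -
  consider "b \<in> Hp" | "b \<in> Hm" | "b \<in> H0" using assms torus_eq_Un by blast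
  then show ?thesis
  proof cases
    case 1
    then have "\<sigma> b \<notin> Hp" "b \<notin> Hm" "b \<notin> H0"
      using image_Hp halfspaces_disjoint by auto
    then show ?thesis using 1 unfolding rearr_def by auto
  next
    case 2
    then have "\<sigma> b \<in> Hp" "b \<notin> Hp" "b \<notin> H0" "\<sigma> b \<noteq> b"
      using assms image_Hm halfspaces_disjoint H0_eq by auto
    then show ?thesis using 2 unfolding rearr_def by auto
  next
    case 3
    then have "\<sigma> b = b" "b \<notin> Hp" "b \<notin> Hm"
      using H0_eq halfspaces_disjoint by auto
    then show ?thesis using 3 unfolding rearr_def by auto
  qed
qed

definition dominated :: "(point \<Rightarrow> real) \<Rightarrow> (point \<Rightarrow> real) \<Rightarrow> bool" where
  "dominated u v \<longleftrightarrow> (\<forall>x\<in>torus n d. 0 \<le> u x) \<and> (\<forall>x\<in>H0. u x \<le> v x) \<and>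
     (\<forall>x\<in>Hp. pair_le (u x) (u (\<sigma> x)) (v x) (v (\<sigma> x)))"

lemma dominated_restrict:
  assumes "dominated u v" "A \<subseteq> torus n d"
  shows "dominated (\<lambda>y. if y \<in> A then u y else 0) (\<lambda>y. if y \<in> rearr \<sigma> H0 Hp Hm A then v y else 0)"
  using assms rearr_H0_iff rearr_Hp_iff[OF assms(2)]
  unfolding dominated_def pair_le_def by (auto simp: torus_eq_Un intro: order_trans)

definition compatible_kernel :: "(point \<Rightarrow> point \<Rightarrow> real) \<Rightarrow> bool" where
  "compatible_kernel K \<longleftrightarrow>
     (\<forall>x\<in>torus n d. \<forall>y\<in>torus n d. 0 \<le> K x y \<and> K (\<sigma> x) (\<sigma> y) = K x y) \<and>
     (\<forall>x\<in>Hp. \<forall>y\<in>Hp. K x (\<sigma> y) \<le> K x y)"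

lemma kernel_op_orbits:
  "kernel_op (torus n d) K u x =
     (\<Sum>y\<in>Hp. K x y * u y + K x (\<sigma> y) * u (\<sigma> y)) + (\<Sum>z\<in>H0. K x z * u z)"
  unfolding kernel_op_def by (rule sum_torus_orbits)

lemma kernel_op_orbits_reflected:
  assumes "compatible_kernel K" "x \<in> torus n d"
  shows "kernel_op (torus n d) K u (\<sigma> x) =
     (\<Sum>y\<in>Hp. K x (\<sigma> y) * u y + K x y * u (\<sigma> y)) + (\<Sum>z\<in>H0. K x z * u z)"
proof -
  have swap: "K (\<sigma> x) y = K x (\<sigma> y)" if "y \<in> torus n d" for y
    using assms that reflection_in_torus reflection_involutive unfolding compatible_kernel_def
    by (metis (no_types))
  have "K (\<sigma> x) y = K x (\<sigma> y)" "K (\<sigma> x) (\<sigma> y) = K x y" if "y \<in> Hp" for y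
    using that swap torus_eq_Un reflection_in_torus reflection_involutive by auto
  moreover have "K (\<sigma> x) z = K x z" if "z \<in> H0" for z
    using that swap H0_eq by auto
  ultimately show ?thesis
    unfolding kernel_op_orbits by (simp cong: sum.cong)
qed

lemma kernel_op_dominated:
  assumes K: "compatible_kernel K" and uv: "dominated u v"
  shows "dominated (kernel_op (torus n d) K u) (kernel_op (torus n d) K v)"
proof -
  have K_nonneg: "0 \<le> K x y" if "x \<in> torus n d" "y \<in> torus n d" for x y
    using K that unfolding compatible_kernel_def by blast
  have H0_part: "(\<Sum>z\<in>H0. K x z * u z) \<le> (\<Sum>z\<in>H0. K x z * v z)" if "x \<in> torus n d" for x
    using uv K_nonneg that torus_eq_Un unfolding dominated_def
    by (intro sum_mono mult_left_mono) auto
  show ?thesis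
    unfolding dominated_def
  proof (intro conjI ballI)
    show "0 \<le> kernel_op (torus n d) K u x" if "x \<in> torus n d" for x
      using uv K_nonneg that unfolding dominated_def kernel_op_def by (auto intro: sum_nonneg)
  next
    fix x
    assume x: "x \<in> H0"
    then have xt: "x \<in> torus n d" "\<sigma> x = x" using H0_eq by auto
    have "K x (\<sigma> y) = K x y" if "y \<in> Hp" for y
      using K xt that torus_eq_Un unfolding compatible_kernel_def by (metis UnCI)
    then have orbit: "kernel_op (torus n d) K w x =
        (\<Sum>y\<in>Hp. K x y * (w y + w (\<sigma> y))) + (\<Sum>z\<in>H0. K x z * w z)" for w
      unfolding kernel_op_orbits by (simp add: distrib_left cong: sum.cong)
    show "kernel_op (torus n d) K u x \<le> kernel_op (torus n d) K v x"
      unfolding orbit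
    proof (rule add_mono[OF sum_mono H0_part[OF xt(1)]])
      fix y
      assume "y \<in> Hp"
      then show "K x y * (u y + u (\<sigma> y)) \<le> K x y * (v y + v (\<sigma> y))"
        using uv K_nonneg xt torus_eq_Un unfolding dominated_def pair_le_def
        by (intro mult_left_mono) auto
    qed
  next
    fix x
    assume x: "x \<in> Hp"
    then have xt: "x \<in> torus n d" using torus_eq_Un by auto
    have "pair_le (K x y * u y + K x (\<sigma> y) * u (\<sigma> y)) (K x (\<sigma> y) * u y + K x y * u (\<sigma> y))
        (K x y * v y + K x (\<sigma> y) * v (\<sigma> y)) (K x (\<sigma> y) * v y + K x y * v (\<sigma> y))" if "y \<in> Hp" for y
      using uv K x that torus_eq_Un reflection_in_torus unfolding dominated_def compatible_kernel_def
      by (intro pair_le_mix) auto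
    then show "pair_le (kernel_op (torus n d) K u x) (kernel_op (torus n d) K u (\<sigma> x))
        (kernel_op (torus n d) K v x) (kernel_op (torus n d) K v (\<sigma> x))"
      unfolding kernel_op_orbits[of K _ x] kernel_op_orbits_reflected[OF K xt]
      by (intro pair_le_add[OF pair_le_sum pair_le_diag] H0_part[OF xt])
  qed
qed

lemma compatible_kernel_lazy_P:
  assumes "1 \<le> n" "1 \<le> d" shows "compatible_kernel (lazy_P n d)"
proof -
  have "0 \<le> lazy_P n d x y" for x y
    unfolding lazy_P_def by (intro add_nonneg_nonneg sum_nonneg divide_nonneg_nonneg) auto
  moreover have "lazy_P n d (\<sigma> x) (\<sigma> y) = lazy_P n d x y" if "x \<in> torus n d" "y \<in> torus n d" for x y
    using that assms by (simp add: lazy_P_eq_profile reflection_in_torus reflection_isometry)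
  moreover have "lazy_P n d x (\<sigma> y) \<le> lazy_P n d x y" if "x \<in> Hp" "y \<in> Hp" for x y
  proof -
    have "x \<in> torus n d" "y \<in> torus n d" using that torus_eq_Un by auto
    then show ?thesis
      using assms tdist_less_reflected[OF that] lazy_profile_antimono
      by (simp add: lazy_P_eq_profile reflection_in_torus)
  qed
  ultimately show ?thesis unfolding compatible_kernel_def by blast
qed

lemma dominated_path_sum:
  assumes "compatible_kernel K" "\<forall>k\<in>{j..<j + m}. D k \<subseteq> torus n d"
  shows "dominated (path_sum (torus n d) K D j m)
                   (path_sum (torus n d) K (\<lambda>k. rearr \<sigma> H0 Hp Hm (D k)) j m)"
  using assms(2)
proof (induction m arbitrary: j)
  case 0
  then show ?case by (simp add: dominated_def path_sum_0 pair_le_def)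
next
  case (Suc m)
  then have "dominated (path_sum (torus n d) K D (Suc j) m)
                   (path_sum (torus n d) K (\<lambda>k. rearr \<sigma> H0 Hp Hm (D k)) (Suc j) m)"
    by simp
  moreover have "D j \<subseteq> torus n d" using Suc.prems by simp
  ultimately show ?case
    unfolding path_sum_Suc[OF finite_torus]
    by (intro kernel_op_dominated[OF assms(1)] dominated_restrict)
qed

lemma dominated_le_at_rearr_singleton:
  assumes "dominated u v" "b \<in> torus n d"
  shows "u b \<le> v (the_elem (rearr \<sigma> H0 Hp Hm {b}))"
proof -
  consider "b \<in> Hp" | "b \<in> Hm" | "b \<in> H0" using assms(2) torus_eq_Un by blast
  then show ?thesis
  proof cases
    case 2
    then have "\<sigma> b \<in> Hp" "\<sigma> (\<sigma> b) = b"
      using image_Hm reflection_involutive torus_eq_Un by auto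
    then show ?thesis
      using assms 2 unfolding dominated_def pair_le_def rearr_singleton[OF assms(2)] by fastforce
  qed (use assms halfspaces_disjoint in \<open>auto simp: dominated_def pair_le_def rearr_singleton\<close>)
qed

end

theorem lemma3p2:
  fixes n d t :: nat and \<sigma> :: "point \<Rightarrow> point" and H0 Hp Hm :: "point set"
    and b :: point and D :: "nat \<Rightarrow> point set"
  assumes "n \<ge> 1" and "d \<ge> 1"
    and "reflection n d \<sigma> H0 Hp Hm"
    and "t \<ge> 1"
    and "b \<in> torus n d"
    and "\<forall>k\<in>{1..t}. D k \<subseteq> torus n d"
  shows "cond_walk_prob n d {b} D t
           \<le> cond_walk_prob n d (rearr \<sigma> H0 Hp Hm {b}) (\<lambda>k. rearr \<sigma> H0 Hp Hm (D k)) t"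
proof -
  interpret torus_reflection n d \<sigma> H0 Hp Hm
    by unfold_locales (fact assms(3))
  have "\<forall>k\<in>{1..<1 + t}. D k \<subseteq> torus n d" using assms(6) by auto
  then have "dominated (path_sum (torus n d) (lazy_P n d) D 1 t)
      (path_sum (torus n d) (lazy_P n d) (\<lambda>k. rearr \<sigma> H0 Hp Hm (D k)) 1 t)"
    using dominated_path_sum compatible_kernel_lazy_P assms(1,2) by blast
  then show ?thesis
    unfolding cond_walk_prob_def walk_prob_eq_path_sum
    using dominated_le_at_rearr_singleton assms(5) by simp
qed

end
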